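(* Let $X$ have the standard Cauchy distribution, with distribution function $F(x)=\frac1\pi\arctan(x)+\frac12$, $x\in\mathbb{R}$, and let $\phi:\mathbb{R}\to\mathbb{R}$ be an arbitrary convex function (not necessarily monotone). Then $\phi(X)\in\mathcal{D}^-$.
   Context: For real random variables, $X \le_{st} Y$ means $P(X\le t)\ge P(Y\le t)$ for all $t\in\mathbb{R}$. A real random variable $X$ (equivalently its distribution function $F_X$) belongs to $\mathcal{D}^-$ if for every $n\in\mathbb{N}$, all $\theta_1,\dots,\theta_n\ge 0$ with $\sum_{i=1}^n\theta_i=1$, and i.i.d. random variables $X_1,\dots,X_n$ with distribution $F_X$, we have $X_1\le_{st}\sum_{i=1}^n\theta_iX_i$. *)

theory Defs
  imports "HOL-Probability.Probability"
begin

definition st_le :: "real measure \<Rightarrow> real measure \<Rightarrow> bool" where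
  "st_le M N \<longleftrightarrow> (\<forall>t::real. measure M {..t} \<ge> measure N {..t})"

text \<open>The class D^- of distributions on the reals. For i.i.d. X_1,...,X_n with law mu,
  the joint law is the product measure, and the law of sum theta_i X_i is its image.\<close>
definition D_minus :: "real measure \<Rightarrow> bool" where
  "D_minus mu \<longleftrightarrow> prob_space mu \<and> sets mu = sets borel \<and>
     (\<forall>n::nat. \<forall>\<theta>::nat \<Rightarrow> real.
        (\<forall>i<n. 0 \<le> \<theta> i) \<and> (\<Sum>i<n. \<theta> i) = 1 \<longrightarrow>
        st_le mu (distr (PiM {..<n} (\<lambda>_. mu)) borel (\<lambda>x. \<Sum>i<n. \<theta> i * x i)))"

definition std_cauchy :: "real measure" where
  "std_cauchy = density lborel (\<lambda>x. ennreal (1 / (pi * (1 + x\<^sup>2))))"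

end

theory Submission
  imports Defs "HOL-Real_Asymp.Real_Asymp"
begin

text \<open>
  The Cauchy family is closed under scaling and convolution, with the scale parameters adding
  up; hence \<open>\<Sum>i. \<theta>\<^sub>i X\<^sub>i\<close> has the same law as \<open>X\<close> whenever the weights \<open>\<theta>\<^sub>i \<ge> 0\<close> sum to 1.
  By Jensen's inequality \<open>\<phi>(\<Sum>i. \<theta>\<^sub>i X\<^sub>i) \<le> \<Sum>i. \<theta>\<^sub>i \<phi>(X\<^sub>i)\<close> pointwise, so
  \<open>P(\<Sum>i. \<theta>\<^sub>i \<phi>(X\<^sub>i) \<le> t) \<le> P(\<phi>(\<Sum>i. \<theta>\<^sub>i X\<^sub>i) \<le> t) = P(\<phi>(X) \<le> t)\<close>.
  The convolution identity is computed by partial fractions.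
\<close>

lemma nn_integral_lborel_FTC:
  fixes f F :: "real \<Rightarrow> real"
  assumes [measurable]: "f \<in> borel_measurable borel"
    and nonneg: "\<And>x. 0 \<le> f x" and deriv: "\<And>x. (F has_real_derivative f x) (at x)"
    and lim_bot: "(F \<longlongrightarrow> L) at_bot" and lim_top: "(F \<longlongrightarrow> U) at_top"
  shows "(\<integral>\<^sup>+x. ennreal (f x) \<partial>lborel) = ennreal (U - L)"
proof -
  define g where "g n x = ennreal (f x) * indicator {- real n..} x" for n :: nat and x
  have "incseq g"
    unfolding incseq_def le_fun_def g_def
    by (auto intro!: mult_left_mono split: split_indicator)
  have "(\<lambda>n. integral\<^sup>N lborel (g n)) \<longlonglongrightarrow> integral\<^sup>N lborel (\<lambda>x. ennreal (f x))"
  proof (rule nn_integral_LIMSEQ[OF \<open>incseq g\<close>])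
    show "g i \<in> borel_measurable lborel" for i unfolding g_def by measurable
    fix x
    obtain m :: nat where "- x \<le> real m" using real_arch_simple by blast
    then have "eventually (\<lambda>n. g n x = ennreal (f x)) sequentially"
      by (intro eventually_sequentiallyI[of m]) (auto simp: g_def split: split_indicator)
    then show "(\<lambda>n. g n x) \<longlonglongrightarrow> ennreal (f x)" by (rule tendsto_eventually)
  qed
  moreover have "(\<lambda>n. integral\<^sup>N lborel (g n)) \<longlonglongrightarrow> ennreal (U - L)"
  proof -
    have "integral\<^sup>N lborel (g n) = ennreal (U - F (- real n))" for n
      unfolding g_def by (rule nn_integral_FTC_atLeast) (use deriv nonneg lim_top in auto)
    moreover have "filterlim (\<lambda>n::nat. - real n) at_bot sequentially"
      by (simp add: filterlim_uminus_at_bot filterlim_real_sequentially)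
    then have "(\<lambda>n. F (- real n)) \<longlonglongrightarrow> L"
      using lim_bot by (rule filterlim_compose[rotated])
    ultimately show ?thesis by (simp add: tendsto_ennrealI tendsto_diff)
  qed
  ultimately show ?thesis by (rule LIMSEQ_unique)
qed

lemma has_real_derivative_arctan_affine:
  fixes s c y :: real
  assumes "s \<noteq> 0"
  shows "((\<lambda>y. arctan ((y - c) / s)) has_real_derivative s / (s\<^sup>2 + (y - c)\<^sup>2)) (at y)"
proof -
  have "((\<lambda>y. arctan ((y - c) / s)) has_real_derivative inverse (1 + ((y - c) / s)\<^sup>2) * (1 / s)) (at y)"
    using assms by (auto intro!: derivative_eq_intros)
  also have "inverse (1 + ((y - c) / s)\<^sup>2) * (1 / s) = s / (s\<^sup>2 + (y - c)\<^sup>2)"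
    using assms by (simp add: field_simps power2_eq_square)
  finally show ?thesis .
qed

lemma has_real_derivative_ln_square_shift:
  fixes s c y :: real
  assumes "s \<noteq> 0"
  shows "((\<lambda>y. ln (s\<^sup>2 + (y - c)\<^sup>2)) has_real_derivative 2 * (y - c) / (s\<^sup>2 + (y - c)\<^sup>2)) (at y)"
proof -
  have "s\<^sup>2 + (y - c)\<^sup>2 > 0" using assms by (simp add: add_pos_nonneg)
  then show ?thesis by (auto intro!: derivative_eq_intros simp: power2_eq_square)
qed

lemma convolution_return_zero:
  fixes M :: "real measure"
  assumes "finite_measure M" and [measurable_cong, simp]: "sets M = sets borel"
  shows "return borel 0 \<star> M = M"
proof (rule measure_eqI)
  fix A assume "A \<in> sets (return borel 0 \<star> M)"
  then have [measurable]: "A \<in> sets borel" by simp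
  interpret finite_measure M by fact
  have "finite_measure (return borel (0::real))"
    by (rule prob_space.finite_measure, rule prob_space_return) simp
  then have "emeasure (return borel 0 \<star> M) A = \<integral>\<^sup>+x. \<integral>\<^sup>+y. indicator A (x + y) \<partial>M \<partial>return borel 0"
    using assms by (intro convolution_emeasure') auto
  also have "\<dots> = emeasure M A"
    by (subst nn_integral_return) auto
  finally show "emeasure (return borel 0 \<star> M) A = emeasure M A" .
qed (simp add: assms)

lemma distr_PiM_weighted_sum_Suc:
  fixes M :: "real measure" and \<theta> :: "nat \<Rightarrow> real"
  assumes "prob_space M" and [measurable_cong]: "sets M = sets borel"
  shows "distr (PiM {..<Suc n} (\<lambda>_. M)) borel (\<lambda>x. \<Sum>i<Suc n. \<theta> i * x i)
    = (distr M borel (\<lambda>x. \<theta> n * x) \<star> distr (PiM {..<n} (\<lambda>_. M)) borel (\<lambda>x. \<Sum>i<n. \<theta> i * x i))"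
proof -
  define P where "P = PiM {..<n} (\<lambda>_. M)"
  define S where "S x = (\<Sum>i<n. \<theta> i * x i)" for x :: "nat \<Rightarrow> real"
  interpret P: prob_space P unfolding P_def using assms by (intro prob_space_PiM) auto
  have [measurable]: "S \<in> borel_measurable P" unfolding S_def P_def by measurable
  have [measurable]: "(\<lambda>(x, X). X(n := x)) \<in> measurable (M \<Otimes>\<^sub>M P) (PiM (insert n {..<n}) (\<lambda>_. M))"
  proof -
    have "(\<lambda>p. (snd p)(n := fst p)) \<in> measurable (M \<Otimes>\<^sub>M P) (PiM ({..<n} \<union> {n}) (\<lambda>_. M))"
      by (rule measurable_fun_upd[where J = "{..<n}"]) (auto simp: P_def)
    then show ?thesis by (simp add: case_prod_beta')
  qed
  have "PiM {..<Suc n} (\<lambda>_. M) = distr (M \<Otimes>\<^sub>M P) (PiM (insert n {..<n}) (\<lambda>_. M)) (\<lambda>(x, X). X(n := x))"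
    unfolding P_def lessThan_Suc using distr_pair_PiM_eq_PiM[of "{..<n}" "\<lambda>_. M" n] assms by simp
  then have "distr (PiM {..<Suc n} (\<lambda>_. M)) borel (\<lambda>x. \<Sum>i<Suc n. \<theta> i * x i)
      = distr (M \<Otimes>\<^sub>M P) borel ((\<lambda>x. \<Sum>i<Suc n. \<theta> i * x i) \<circ> (\<lambda>(x, X). X(n := x)))"
    by (simp only:) (rule distr_distr, auto simp: lessThan_Suc)
  also have "\<dots> = distr (M \<Otimes>\<^sub>M P) borel (\<lambda>(x, X). \<theta> n * x + S X)"
    by (intro distr_cong) (auto simp: S_def)
  also have "\<dots> = distr (distr (M \<Otimes>\<^sub>M P) (borel \<Otimes>\<^sub>M borel) (\<lambda>(x, X). (\<theta> n * x, S X)))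
      borel (\<lambda>(u, v). u + v)"
    by (subst distr_distr) (auto simp: comp_def case_prod_beta')
  also have "\<dots> = distr (distr M borel (\<lambda>x. \<theta> n * x) \<Otimes>\<^sub>M distr P borel S) borel (\<lambda>(u, v). u + v)"
    using assms P.prob_space_distr[of S borel]
    by (subst pair_measure_distr) (auto intro: prob_space_imp_sigma_finite)
  finally show ?thesis unfolding convolution_def P_def S_def .
qed

lemma convex_on_UNIV_borel_measurable:
  fixes \<phi> :: "real \<Rightarrow> real"
  assumes "convex_on UNIV \<phi>"
  shows "\<phi> \<in> borel_measurable borel"
  using convex_measurable[of "\<lambda>x. x" borel UNIV \<phi>] assms by simp

lemma st_le_convex_weighted_sum:
  fixes M :: "real measure" and \<phi> :: "real \<Rightarrow> real" and n :: nat and \<theta> :: "nat \<Rightarrow> real"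
  assumes "prob_space M" and sets_M [measurable_cong]: "sets M = sets borel"
    and "convex_on UNIV \<phi>" and "\<forall>i<n. 0 \<le> \<theta> i" and "(\<Sum>i<n. \<theta> i) = 1"
  shows "st_le (distr (distr (PiM {..<n} (\<lambda>_. M)) borel (\<lambda>x. \<Sum>i<n. \<theta> i * x i)) borel \<phi>)
    (distr (PiM {..<n} (\<lambda>_. distr M borel \<phi>)) borel (\<lambda>x. \<Sum>i<n. \<theta> i * x i))"
  unfolding st_le_def
proof
  fix t :: real
  define P where "P = PiM {..<n} (\<lambda>_. M)"
  interpret P: prob_space P unfolding P_def using assms by (intro prob_space_PiM) auto
  have [measurable]: "\<phi> \<in> borel_measurable borel"
    using \<open>convex_on UNIV \<phi>\<close> by (rule convex_on_UNIV_borel_measurable)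
  have compose_measurable [measurable]:
      "compose {..<n} \<phi> \<in> measurable (PiM {..<n} (\<lambda>_. M)) (PiM {..<n} (\<lambda>_. M))"
    unfolding compose_def by (intro measurable_restrict) auto
  have "distr M borel \<phi> = distr M M \<phi>" by (rule distr_cong) (auto simp: sets_M)
  then have pim: "PiM {..<n} (\<lambda>_. distr M borel \<phi>) = distr P P (compose {..<n} \<phi>)"
    unfolding P_def using assms by (simp add: distr_PiM_finite_prob_space')
  have "measure (distr (PiM {..<n} (\<lambda>_. distr M borel \<phi>)) borel (\<lambda>x. \<Sum>i<n. \<theta> i * x i)) {..t}
      = measure P {x \<in> space P. (\<Sum>i<n. \<theta> i * \<phi> (x i)) \<le> t}"
    unfolding pim by (subst measure_distr; (simp add: P_def)?)+
      (auto intro!: arg_cong[where f = "measure _"] simp: compose_def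
        measurable_space[OF compose_measurable, unfolded compose_def])
  also have "\<dots> \<le> measure P {x \<in> space P. \<phi> (\<Sum>i<n. \<theta> i * x i) \<le> t}"
  proof (rule P.finite_measure_mono)
    show "{x \<in> space P. \<phi> (\<Sum>i<n. \<theta> i * x i) \<le> t} \<in> sets P" unfolding P_def by measurable
    have "\<phi> (\<Sum>i<n. \<theta> i * x i) \<le> (\<Sum>i<n. \<theta> i * \<phi> (x i))" for x :: "nat \<Rightarrow> real"
    proof -
      have "{..<n} \<noteq> {}" using \<open>(\<Sum>i<n. \<theta> i) = 1\<close> by auto
      then show ?thesis
        using convex_on_sum[OF _ _ \<open>convex_on UNIV \<phi>\<close>, of "{..<n}" \<theta> x] assms by auto
    qed
    then show "{x \<in> space P. (\<Sum>i<n. \<theta> i * \<phi> (x i)) \<le> t} \<subseteq> {x \<in> space P. \<phi> (\<Sum>i<n. \<theta> i * x i) \<le> t}"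
      by (auto intro: order_trans)
  qed
  also have "\<dots> = measure (distr (distr P borel (\<lambda>x. \<Sum>i<n. \<theta> i * x i)) borel \<phi>) {..t}"
    by (simp add: measure_distr distr_distr comp_def P_def)
      (auto intro!: arg_cong[where f = "measure _"])
  finally show "measure (distr (PiM {..<n} (\<lambda>_. distr M borel \<phi>)) borel (\<lambda>x. \<Sum>i<n. \<theta> i * x i)) {..t}
      \<le> measure (distr (distr (PiM {..<n} (\<lambda>_. M)) borel (\<lambda>x. \<Sum>i<n. \<theta> i * x i)) borel \<phi>) {..t}"
    unfolding P_def .
qed

lemma D_minus_distr_convex:
  fixes M :: "real measure" and \<phi> :: "real \<Rightarrow> real"
  assumes "prob_space M" and "sets M = sets borel" and "convex_on UNIV \<phi>"
    and stable: "\<And>(n :: nat) (\<theta> :: nat \<Rightarrow> real). \<forall>i<n. 0 \<le> \<theta> i \<Longrightarrow> (\<Sum>i<n. \<theta> i) = 1 \<Longrightarrow>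
      distr (PiM {..<n} (\<lambda>_. M)) borel (\<lambda>x. \<Sum>i<n. \<theta> i * x i) = M"
  shows "D_minus (distr M borel \<phi>)"
  unfolding D_minus_def
proof (intro conjI allI impI)
  have "\<phi> \<in> borel_measurable borel"
    using \<open>convex_on UNIV \<phi>\<close> by (rule convex_on_UNIV_borel_measurable)
  then have "\<phi> \<in> borel_measurable M"
    by (subst measurable_cong_sets[OF \<open>sets M = sets borel\<close> refl])
  then show "prob_space (distr M borel \<phi>)"
    using assms by (simp add: prob_space.prob_space_distr)
  show "sets (distr M borel \<phi>) = sets borel" by simp
  fix n :: nat and \<theta> :: "nat \<Rightarrow> real"
  assume "(\<forall>i<n. 0 \<le> \<theta> i) \<and> (\<Sum>i<n. \<theta> i) = 1"
  then have "distr (PiM {..<n} (\<lambda>_. M)) borel (\<lambda>x. \<Sum>i<n. \<theta> i * x i) = M"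
    and "st_le (distr (distr (PiM {..<n} (\<lambda>_. M)) borel (\<lambda>x. \<Sum>i<n. \<theta> i * x i)) borel \<phi>)
      (distr (PiM {..<n} (\<lambda>_. distr M borel \<phi>)) borel (\<lambda>x. \<Sum>i<n. \<theta> i * x i))"
    using stable[of n \<theta>] st_le_convex_weighted_sum[OF assms(1-3), where n = n and \<theta> = \<theta>] by simp_all
  then show "st_le (distr M borel \<phi>) (distr (PiM {..<n} (\<lambda>_. distr M borel \<phi>)) borel (\<lambda>x. \<Sum>i<n. \<theta> i * x i))"
    by simp
qed

definition cauchy_density :: "real \<Rightarrow> real \<Rightarrow> real" where
  "cauchy_density s x = s / (pi * (s\<^sup>2 + x\<^sup>2))"

lemma cauchy_density_nonneg: "0 \<le> s \<Longrightarrow> 0 \<le> cauchy_density s x"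
  unfolding cauchy_density_def by (auto intro!: divide_nonneg_nonneg)

lemma borel_measurable_cauchy_density[measurable]: "cauchy_density s \<in> borel_measurable borel"
  unfolding cauchy_density_def by measurable

lemma nn_integral_cauchy_density:
  assumes "s > 0"
  shows "(\<integral>\<^sup>+x. ennreal (cauchy_density s x) \<partial>lborel) = 1"
proof -
  have "(\<integral>\<^sup>+x. ennreal (cauchy_density s x) \<partial>lborel) = ennreal (1/2 - (-1/2))"
  proof (rule nn_integral_lborel_FTC[where F = "\<lambda>x. arctan (x / s) / pi"])
    show "((\<lambda>x. arctan (x / s) / pi) has_real_derivative cauchy_density s x) (at x)" for x
      using DERIV_cdivide[OF has_real_derivative_arctan_affine[of s 0 x, simplified], of pi] assms
      by (simp add: cauchy_density_def mult.commute)
    show "((\<lambda>x. arctan (x / s) / pi) \<longlongrightarrow> -1/2) at_bot" using assms by real_asymp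
    show "((\<lambda>x. arctan (x / s) / pi) \<longlongrightarrow> 1/2) at_top" using assms by real_asymp
  qed (use assms cauchy_density_nonneg in auto)
  then show ?thesis by simp
qed

text \<open>A primitive of \<open>y \<mapsto> cauchy_density a (z - y) * cauchy_density b y\<close>, obtained by
  decomposing \<open>1 / ((a\<^sup>2 + (y - z)\<^sup>2) (b\<^sup>2 + y\<^sup>2))\<close> into partial fractions. The normalising
  denominator vanishes for \<open>a = b, z = 0\<close>, whence the hypothesis \<open>z \<noteq> 0\<close> below.\<close>
definition cauchy_conv_primitive :: "real \<Rightarrow> real \<Rightarrow> real \<Rightarrow> real \<Rightarrow> real" where
  "cauchy_conv_primitive a b z y =
     a * b / (pi\<^sup>2 * ((a + b)\<^sup>2 + z\<^sup>2) * ((a - b)\<^sup>2 + z\<^sup>2)) *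
     (z * (ln (b\<^sup>2 + y\<^sup>2) - ln (a\<^sup>2 + (y - z)\<^sup>2))
      + (a\<^sup>2 - b\<^sup>2 + z\<^sup>2) / b * arctan (y / b) + (b\<^sup>2 - a\<^sup>2 + z\<^sup>2) / a * arctan ((y - z) / a))"

lemma cauchy_partial_fractions:
  fixes a b z y :: real
  shows "((a + b)\<^sup>2 + z\<^sup>2) * ((a - b)\<^sup>2 + z\<^sup>2) =
    (2 * z * y + a\<^sup>2 - b\<^sup>2 + z\<^sup>2) * (a\<^sup>2 + (y - z)\<^sup>2) + (b\<^sup>2 - a\<^sup>2 + z\<^sup>2 - 2 * z * (y - z)) * (b\<^sup>2 + y\<^sup>2)"
  by algebra

lemma cauchy_conv_primitive_deriv:
  assumes "a > 0" "b > 0" "z \<noteq> 0"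
  shows "(cauchy_conv_primitive a b z has_real_derivative cauchy_density a (z - y) * cauchy_density b y) (at y)"
proof -
  define A B P M where "A = a\<^sup>2 + (y - z)\<^sup>2" and "B = b\<^sup>2 + y\<^sup>2"
    and "P = (a + b)\<^sup>2 + z\<^sup>2" and "M = (a - b)\<^sup>2 + z\<^sup>2"
  have pos: "A > 0" "B > 0" "P > 0" "M > 0"
    using assms by (auto simp: A_def B_def P_def M_def intro: add_pos_nonneg add_nonneg_pos)
  have "(cauchy_conv_primitive a b z has_real_derivative
          a * b / (pi\<^sup>2 * P * M) * (z * (2 * y / B - 2 * (y - z) / A)
            + (a\<^sup>2 - b\<^sup>2 + z\<^sup>2) / b * (b / B) + (b\<^sup>2 - a\<^sup>2 + z\<^sup>2) / a * (a / A))) (at y)"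
    unfolding cauchy_conv_primitive_def A_def B_def P_def M_def
    using has_real_derivative_arctan_affine[of b 0 y, simplified]
      has_real_derivative_ln_square_shift[of b 0 y, simplified]
      has_real_derivative_arctan_affine[of a z y] has_real_derivative_ln_square_shift[of a z y] assms
    by (intro DERIV_cmult DERIV_add DERIV_diff) auto
  also have "a * b / (pi\<^sup>2 * P * M) * (z * (2 * y / B - 2 * (y - z) / A)
            + (a\<^sup>2 - b\<^sup>2 + z\<^sup>2) / b * (b / B) + (b\<^sup>2 - a\<^sup>2 + z\<^sup>2) / a * (a / A))
      = a * b / (pi\<^sup>2 * P * M) * (((2 * z * y + a\<^sup>2 - b\<^sup>2 + z\<^sup>2) * A + (b\<^sup>2 - a\<^sup>2 + z\<^sup>2 - 2 * z * (y - z)) * B) / (A * B))"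
    using pos assms by (simp add: field_simps)
  also have "\<dots> = cauchy_density a (z - y) * cauchy_density b y"
    using pos unfolding cauchy_partial_fractions[of a b z y, folded A_def B_def P_def M_def, symmetric]
    by (simp add: cauchy_density_def A_def B_def power2_commute[of z y] field_simps power2_eq_square)
  finally show ?thesis .
qed

lemma tendsto_cauchy_conv_primitive:
  assumes "a > 0" "b > 0" "z \<noteq> 0"
  shows "(cauchy_conv_primitive a b z \<longlongrightarrow> cauchy_density (a + b) z / 2) at_top"
    and "(cauchy_conv_primitive a b z \<longlongrightarrow> - cauchy_density (a + b) z / 2) at_bot"
proof -
  define P M c1 c2 where "P = (a + b)\<^sup>2 + z\<^sup>2" and "M = (a - b)\<^sup>2 + z\<^sup>2"
    and "c1 = a\<^sup>2 - b\<^sup>2 + z\<^sup>2" and "c2 = b\<^sup>2 - a\<^sup>2 + z\<^sup>2"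
  have "P > 0" "M > 0" using assms by (auto simp: P_def M_def intro: add_nonneg_pos)
  have "a * c1 + b * c2 = (a + b) * M"
    unfolding M_def c1_def c2_def by algebra
  have "a * b / (pi\<^sup>2 * P * M) * (c1 / b * (pi / 2) + c2 / a * (pi / 2))
      = (a * c1 + b * c2) / (2 * pi * P * M)"
    using assms \<open>P > 0\<close> \<open>M > 0\<close> by (simp add: field_simps power2_eq_square)
  also have "\<dots> = cauchy_density (a + b) z / 2"
    using \<open>a * c1 + b * c2 = (a + b) * M\<close> \<open>M > 0\<close> unfolding cauchy_density_def P_def by simp
  finally have limit: "a * b / (pi\<^sup>2 * P * M) * (c1 / b * (pi / 2) + c2 / a * (pi / 2))
      = cauchy_density (a + b) z / 2" .
  have "(cauchy_conv_primitive a b z \<longlongrightarrow>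
      a * b / (pi\<^sup>2 * P * M) * (c1 / b * (pi / 2) + c2 / a * (pi / 2))) at_top"
    unfolding cauchy_conv_primitive_def P_def M_def c1_def c2_def using assms by real_asymp
  then show "(cauchy_conv_primitive a b z \<longlongrightarrow> cauchy_density (a + b) z / 2) at_top"
    unfolding limit .
  have "(cauchy_conv_primitive a b z \<longlongrightarrow>
      a * b / (pi\<^sup>2 * P * M) * (c1 / b * (- pi / 2) + c2 / a * (- pi / 2))) at_bot"
    unfolding cauchy_conv_primitive_def P_def M_def c1_def c2_def using assms by real_asymp
  moreover have "a * b / (pi\<^sup>2 * P * M) * (c1 / b * (- pi / 2) + c2 / a * (- pi / 2))
      = - (a * b / (pi\<^sup>2 * P * M) * (c1 / b * (pi / 2) + c2 / a * (pi / 2)))"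
    by (simp add: algebra_simps)
  ultimately show "(cauchy_conv_primitive a b z \<longlongrightarrow> - cauchy_density (a + b) z / 2) at_bot"
    unfolding limit by simp
qed

lemma nn_integral_cauchy_density_convolution:
  assumes "a > 0" "b > 0" "z \<noteq> 0"
  shows "(\<integral>\<^sup>+y. ennreal (cauchy_density a (z - y) * cauchy_density b y) \<partial>lborel)
    = ennreal (cauchy_density (a + b) z)"
proof -
  have "(\<integral>\<^sup>+y. ennreal (cauchy_density a (z - y) * cauchy_density b y) \<partial>lborel)
      = ennreal (cauchy_density (a + b) z / 2 - - cauchy_density (a + b) z / 2)"
    using assms
    by (intro nn_integral_lborel_FTC[where F = "cauchy_conv_primitive a b z"]
        cauchy_conv_primitive_deriv tendsto_cauchy_conv_primitive)
      (auto intro!: mult_nonneg_nonneg cauchy_density_nonneg)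
  then show ?thesis by simp
qed

text \<open>The law of \<open>s X\<close> for a standard Cauchy variable \<open>X\<close>; for \<open>s = 0\<close> it is the point mass
  at \<open>0\<close>, so that zero weights need no special treatment.\<close>
definition cauchy :: "real \<Rightarrow> real measure" where
  "cauchy s = (if s = 0 then return borel 0 else density lborel (\<lambda>x. ennreal (cauchy_density s x)))"

lemma sets_cauchy [simp, measurable_cong]: "sets (cauchy s) = sets borel"
  unfolding cauchy_def by auto

lemma space_cauchy [simp]: "space (cauchy s) = UNIV"
  using sets_eq_imp_space_eq[OF sets_cauchy[of s]] by simp

lemma cauchy_eq_density: "s \<noteq> 0 \<Longrightarrow> cauchy s = density lborel (\<lambda>x. ennreal (cauchy_density s x))"
  unfolding cauchy_def by simp

lemma std_cauchy_eq_cauchy_1: "std_cauchy = cauchy 1"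
  unfolding std_cauchy_def cauchy_def cauchy_density_def by simp

lemma prob_space_cauchy:
  assumes "s \<ge> 0"
  shows "prob_space (cauchy s)"
proof (cases "s = 0")
  case True
  then show ?thesis unfolding cauchy_def by (simp add: prob_space_return)
next
  case False
  show ?thesis
  proof (rule prob_spaceI)
    have "emeasure (cauchy s) UNIV = (\<integral>\<^sup>+x. ennreal (cauchy_density s x) \<partial>lborel)"
      unfolding cauchy_eq_density[OF False] by (subst emeasure_density) auto
    then show "emeasure (cauchy s) (space (cauchy s)) = 1"
      using nn_integral_cauchy_density False assms by simp
  qed
qed

lemma emeasure_cauchy_scale:
  assumes "c > 0" "s > 0" and [measurable]: "A \<in> sets borel"
  shows "emeasure (cauchy s) ((\<lambda>x. c * x) -` A) = emeasure (cauchy (c * s)) A"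
proof -
  have "s \<noteq> 0" "c * s \<noteq> 0" using assms by auto
  have [measurable]: "(\<lambda>x. c * x) -` A \<in> sets borel"
    using measurable_sets_borel[of "\<lambda>x. c * x" borel A] by simp
  have density_scale: "cauchy_density s x = c * cauchy_density (c * s) (c * x)" for x
  proof -
    have "pi * ((c * s)\<^sup>2 + (c * x)\<^sup>2) = c\<^sup>2 * (pi * (s\<^sup>2 + x\<^sup>2))"
      by (simp add: algebra_simps power_mult_distrib)
    then show ?thesis
      using assms unfolding cauchy_density_def by (simp add: power2_eq_square)
  qed
  have "emeasure (cauchy s) ((\<lambda>x. c * x) -` A)
      = (\<integral>\<^sup>+x. ennreal (cauchy_density s x) * indicator A (c * x) \<partial>lborel)"
    using assms unfolding cauchy_eq_density[OF \<open>s \<noteq> 0\<close>]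
    by (subst emeasure_density) (auto intro!: nn_integral_cong split: split_indicator)
  also have "\<dots> = ennreal c *
      (\<integral>\<^sup>+x. ennreal (cauchy_density (c * s) (0 + c * x)) * indicator A (0 + c * x) \<partial>lborel)"
    using assms unfolding density_scale
    by (subst nn_integral_cmult[symmetric])
      (auto intro!: nn_integral_cong simp: ennreal_mult cauchy_density_nonneg mult.assoc)
  also have "\<dots> = (\<integral>\<^sup>+x. ennreal (cauchy_density (c * s) x) * indicator A x \<partial>lborel)"
    using assms by (subst nn_integral_real_affine[where c = c and t = 0]) auto
  also have "\<dots> = emeasure (cauchy (c * s)) A"
    using assms unfolding cauchy_eq_density[OF \<open>c * s \<noteq> 0\<close>] by (subst emeasure_density) auto
  finally show ?thesis .
qed

lemma distr_cauchy_scale: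
  assumes "c \<ge> 0" "s \<ge> 0"
  shows "distr (cauchy s) borel (\<lambda>x. c * x) = cauchy (c * s)"
proof -
  consider "c = 0" | "s = 0" | "c > 0" "s > 0" using assms by linarith
  then show ?thesis
  proof cases
    case 1
    interpret prob_space "cauchy s" using prob_space_cauchy assms by blast
    show ?thesis using 1 by (simp add: cauchy_def[of 0])
  next
    case 2
    then show ?thesis by (simp add: cauchy_def distr_return)
  next
    case 3
    then show ?thesis
      by (intro measure_eqI) (auto simp: emeasure_distr emeasure_cauchy_scale)
  qed
qed

lemma cauchy_convolution:
  assumes "a \<ge> 0" "b \<ge> 0"
  shows "cauchy a \<star> cauchy b = cauchy (a + b)"
proof -
  have fin: "finite_measure (cauchy a)" "finite_measure (cauchy b)"
    using assms by (auto intro: prob_space_cauchy prob_space.finite_measure)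
  consider "a = 0" | "b = 0" | "a > 0" "b > 0" using assms by linarith
  then show ?thesis
  proof cases
    case 1
    then show ?thesis using convolution_return_zero[OF fin(2)] by (simp add: cauchy_def[of 0])
  next
    case 2
    then show ?thesis using convolution_return_zero[OF fin(1)] convolution_commutative[OF fin]
      by (simp add: cauchy_def[of 0])
  next
    case 3
    then have "a \<noteq> 0" "b \<noteq> 0" by auto
    have "cauchy a \<star> cauchy b
        = density lborel (\<lambda>x. \<integral>\<^sup>+y. ennreal (cauchy_density a (x - y)) * ennreal (cauchy_density b y) \<partial>lborel)"
      using fin unfolding cauchy_eq_density[OF \<open>a \<noteq> 0\<close>] cauchy_eq_density[OF \<open>b \<noteq> 0\<close>] by (intro convolution_density) auto
    also have "\<dots> = density lborel (\<lambda>x. ennreal (cauchy_density (a + b) x))"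
    proof (rule density_cong)
      show "AE x in lborel. (\<integral>\<^sup>+y. ennreal (cauchy_density a (x - y)) * ennreal (cauchy_density b y) \<partial>lborel)
          = ennreal (cauchy_density (a + b) x)"
        using AE_lborel_singleton[of 0]
      proof eventually_elim
        case (elim x)
        then show ?case
          using 3 nn_integral_cauchy_density_convolution[of a b x]
          by (simp add: ennreal_mult[symmetric] cauchy_density_nonneg)
      qed
    qed auto
    also have "\<dots> = cauchy (a + b)" using 3 by (simp add: cauchy_eq_density)
    finally show ?thesis .
  qed
qed

lemma distr_PiM_cauchy_weighted_sum:
  fixes n :: nat and \<theta> :: "nat \<Rightarrow> real"
  assumes "s \<ge> 0" and "\<forall>i<n. 0 \<le> \<theta> i"
  shows "distr (PiM {..<n} (\<lambda>_. cauchy s)) borel (\<lambda>x. \<Sum>i<n. \<theta> i * x i) = cauchy ((\<Sum>i<n. \<theta> i) * s)"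
  using assms(2)
proof (induction n)
  case 0
  interpret prob_space "PiM {..<0::nat} (\<lambda>_. cauchy s)"
    using assms(1) by (intro prob_space_PiM prob_space_cauchy) simp
  have "distr (PiM {..<0::nat} (\<lambda>_. cauchy s)) borel (\<lambda>x. 0) = return borel (0::real)"
    by (rule distr_const) simp
  then show ?case by (simp add: cauchy_def[of 0])
next
  case (Suc n)
  have "distr (PiM {..<Suc n} (\<lambda>_. cauchy s)) borel (\<lambda>x. \<Sum>i<Suc n. \<theta> i * x i)
      = (cauchy (\<theta> n * s) \<star> cauchy ((\<Sum>i<n. \<theta> i) * s))"
    using Suc assms(1)
    by (subst distr_PiM_weighted_sum_Suc) (simp_all add: prob_space_cauchy distr_cauchy_scale)
  also have "\<dots> = cauchy ((\<Sum>i<Suc n. \<theta> i) * s)"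
    using Suc.prems assms(1)
    by (subst cauchy_convolution) (auto intro!: sum_nonneg mult_nonneg_nonneg simp: algebra_simps)
  finally show ?case .
qed

theorem theorem6:
  fixes \<phi> :: "real \<Rightarrow> real"
  assumes "convex_on UNIV \<phi>"
  shows "D_minus (distr std_cauchy borel \<phi>)"
  unfolding std_cauchy_eq_cauchy_1
proof (rule D_minus_distr_convex[OF prob_space_cauchy _ assms])
  fix n :: nat and \<theta> :: "nat \<Rightarrow> real"
  assume "\<forall>i<n. 0 \<le> \<theta> i" "(\<Sum>i<n. \<theta> i) = 1"
  then show "distr (PiM {..<n} (\<lambda>_. cauchy 1)) borel (\<lambda>x. \<Sum>i<n. \<theta> i * x i) = cauchy 1"
    by (simp add: distr_PiM_cauchy_weighted_sum)
qed simp_all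

end
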